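(* Let $L_1,\dots,L_n$ be lines in $\mathbb{R}^3$ with $d(L_i,L_j)=1$ for all $1\le i<j\le n$, where $d(L,L')=\min_{x\in L,\,y\in L'}\|x-y\|$. If two of the lines $L_1,\dots,L_n$ are parallel, then $n\le 4$.
   Context: $\|\cdot\|$ is the Euclidean norm on $\mathbb{R}^3$. *)

theory Defs
  imports "HOL-Analysis.Analysis"
begin

definition line3 :: "real^3 \<Rightarrow> real^3 \<Rightarrow> (real^3) set" where
  "line3 p v = {p + t *\<^sub>R v | t. True}"

definition is_line3 :: "(real^3) set \<Rightarrow> bool" where
  "is_line3 L \<longleftrightarrow> (\<exists>p v. v \<noteq> 0 \<and> L = line3 p v)"

text \<open>Distance between two lines: d(L,L') = min over x in L, y in L' of norm (x - y)
 (the infimum, which is attained for lines).\<close>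
definition line_dist :: "(real^3) set \<Rightarrow> (real^3) set \<Rightarrow> real" where
  "line_dist L L' = Inf {norm (x - y) | x y. x \<in> L \<and> y \<in> L'}"

definition parallel_lines :: "(real^3) set \<Rightarrow> (real^3) set \<Rightarrow> bool" where
  "parallel_lines L L' \<longleftrightarrow> (\<exists>p q v. v \<noteq> 0 \<and> L = line3 p v \<and> L' = line3 q v)"

end

(* Let A = a + Rv and B = b + Rv be the two parallel lines, e the unit vector from A to B
   orthogonal to v, and u the unit vector orthogonal to both v and e. Any further line C at
   distance 1 from A and B is of one of two kinds. If C is parallel to v, its trace in the
   plane orthogonal to v is an apex of the equilateral triangle over the traces of A and B,
   so its offset (c - a) . u is +-sqrt 3 / 2. Otherwise the common normal of C with A and of
   C with B must both be u, so C is orthogonal to u and has offset +-1. Two such lines that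
   are parallel to each other or skew have distance equal to the difference of their offsets,
   which is never 1. Hence, with five lines, the three lines besides A and B are not parallel
   to v and are pairwise parallel, and together with A they form the same forbidden
   configuration of three parallel lines plus one more. *)

theory Submission
  imports Defs
begin

lemma abs_diff_ne_1_if_squares_3_4:
  fixes k h :: real
  assumes "k\<^sup>2 = 3/4" "h\<^sup>2 = 3/4"
  shows "\<bar>k - h\<bar> \<noteq> 1"
proof
  assume "\<bar>k - h\<bar> = 1"
  then have "(k - h)\<^sup>2 = 1" by (metis power2_abs power_one)
  then have "k * h = 1/4" using assms by (simp add: power2_diff)
  then have "(1/4 :: real)\<^sup>2 = (k * h)\<^sup>2" by simp
  also have "\<dots> = 9/16" unfolding power_mult_distrib assms by simp
  finally show False by (simp add: power2_eq_square)
qed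

lemma abs_diff_ne_1_if_square_3_4_abs_1:
  fixes k h :: real
  assumes "k\<^sup>2 = 3/4" "\<bar>h\<bar> = 1"
  shows "\<bar>k - h\<bar> \<noteq> 1"
proof
  assume "\<bar>k - h\<bar> = 1"
  then have "k = 0 \<or> k = 2 \<or> k = -2" using assms(2) by arith
  then show False using assms(1) by auto
qed

lemma abs_diff_ne_1_if_abs_1:
  fixes k h :: real
  assumes "\<bar>k\<bar> = 1" "\<bar>h\<bar> = 1"
  shows "\<bar>k - h\<bar> \<noteq> 1"
  using assms by arith

lemma line_dist_eqI:
  assumes "x0 \<in> L" "y0 \<in> M" "norm (x0 - y0) = z"
    and "\<And>x y. x \<in> L \<Longrightarrow> y \<in> M \<Longrightarrow> z \<le> norm (x - y)"
  shows "line_dist L M = z"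
  unfolding line_dist_def by (rule cInf_eq_minimum) (use assms in auto)

lemma line_dist_commute: "line_dist L M = line_dist M L"
proof -
  have "{norm (x - y) |x y. x \<in> L \<and> y \<in> M} = {norm (x - y) |x y. x \<in> M \<and> y \<in> L}"
    using norm_minus_commute by blast
  then show ?thesis unfolding line_dist_def by simp
qed

lemma line3_memI: "p + t *\<^sub>R v \<in> line3 p v"
  by (auto simp: line3_def)

lemma line3_memE:
  assumes "x \<in> line3 p v"
  obtains t where "x = p + t *\<^sub>R v"
  using assms by (auto simp: line3_def)

lemma line3_scaleR:
  assumes "c \<noteq> 0"
  shows "line3 p (c *\<^sub>R v) = line3 p v"
proof -
  have "p + t *\<^sub>R (c *\<^sub>R v) = p + (t * c) *\<^sub>R v" for t by simp
  moreover have "p + t *\<^sub>R v = p + (t / c) *\<^sub>R (c *\<^sub>R v)" for t using assms by simp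
  ultimately show ?thesis unfolding line3_def by blast
qed

lemma cross3_eq_0_imp_scaleR:
  fixes x y :: "real^3"
  assumes "cross3 x y = 0"
  shows "(y \<bullet> y) *\<^sub>R x = (x \<bullet> y) *\<^sub>R y"
proof -
  have "cross3 y (cross3 y x) = (y \<bullet> x) *\<^sub>R y - (y \<bullet> y) *\<^sub>R x" by (rule Lagrange)
  moreover have "cross3 y x = 0" using assms cross_skew[of y x] by simp
  ultimately show ?thesis by (simp add: inner_commute)
qed

lemma cross3_eq_0_trans:
  fixes x y m :: "real^3"
  assumes "cross3 x m = 0" "cross3 y m = 0" "m \<noteq> 0"
  shows "cross3 x y = 0"
proof -
  have "((m \<bullet> m) * (m \<bullet> m)) *\<^sub>R cross3 x y = cross3 ((m \<bullet> m) *\<^sub>R x) ((m \<bullet> m) *\<^sub>R y)"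
    by (simp add: cross_mult_left cross_mult_right)
  also have "\<dots> = cross3 ((x \<bullet> m) *\<^sub>R m) ((y \<bullet> m) *\<^sub>R m)"
    unfolding cross3_eq_0_imp_scaleR[OF assms(1)] cross3_eq_0_imp_scaleR[OF assms(2)] ..
  also have "\<dots> = 0" by (simp add: cross_mult_left cross_mult_right)
  finally show ?thesis using assms(3) by simp
qed

lemma line3_eq_if_cross3_eq_0:
  fixes v w :: "real^3"
  assumes "cross3 v w = 0" "v \<noteq> 0" "w \<noteq> 0"
  shows "line3 d w = line3 d v"
proof -
  have wv: "cross3 w v = 0" using assms(1) cross_skew[of w v] by simp
  have "w = (1 / (v \<bullet> v)) *\<^sub>R ((v \<bullet> v) *\<^sub>R w)" using assms(2) by simp
  also have "\<dots> = ((w \<bullet> v) / (v \<bullet> v)) *\<^sub>R v"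
    unfolding cross3_eq_0_imp_scaleR[OF wv] by simp
  finally have "w = ((w \<bullet> v) / (v \<bullet> v)) *\<^sub>R v" .
  moreover have "(w \<bullet> v) / (v \<bullet> v) \<noteq> 0" using assms(3) calculation by (metis scale_zero_left)
  ultimately show ?thesis by (metis line3_scaleR)
qed

definition reject :: "real^3 \<Rightarrow> real^3 \<Rightarrow> real^3" where
  "reject v x = x - ((x \<bullet> v) / (v \<bullet> v)) *\<^sub>R v"

lemma reject_orthogonal: "reject v x \<bullet> v = 0"
  by (cases "v = 0") (simp_all add: reject_def inner_diff_left)

lemma reject_diff: "reject v (x - y) = reject v x - reject v y"
  unfolding reject_def by (simp add: inner_diff_left diff_divide_distrib algebra_simps)

lemma reject_minus: "reject v (- x) = - reject v x"
  unfolding reject_def by simp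

lemma inner_reject_orthogonal: "n \<bullet> v = 0 \<Longrightarrow> reject v x \<bullet> n = x \<bullet> n"
  unfolding reject_def by (simp add: inner_diff_left inner_commute[of v n])

lemma line_dist_parallel:
  fixes p q v :: "real^3"
  assumes "v \<noteq> 0"
  shows "line_dist (line3 p v) (line3 q v) = norm (reject v (p - q))"
proof (rule line_dist_eqI)
  define c where "c = ((p - q) \<bullet> v) / (v \<bullet> v)"
  show "p \<in> line3 p v" using line3_memI[of p 0 v] by simp
  show "q + c *\<^sub>R v \<in> line3 q v" by (rule line3_memI)
  show "norm (p - (q + c *\<^sub>R v)) = norm (reject v (p - q))"
    unfolding reject_def c_def by (simp add: algebra_simps)
  fix x y assume "x \<in> line3 p v" "y \<in> line3 q v"
  then obtain s t where "x = p + s *\<^sub>R v" "y = q + t *\<^sub>R v" by (metis line3_memE)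
  then have "x - y = reject v (p - q) + (s - t + c) *\<^sub>R v"
    unfolding reject_def c_def by (simp add: algebra_simps)
  moreover have "orthogonal (reject v (p - q)) ((s - t + c) *\<^sub>R v)"
    using reject_orthogonal by (simp add: orthogonal_def)
  ultimately have "(norm (x - y))\<^sup>2 = (norm (reject v (p - q)))\<^sup>2 + (norm ((s - t + c) *\<^sub>R v))\<^sup>2"
    by (simp add: norm_add_Pythagorean)
  then show "norm (reject v (p - q)) \<le> norm (x - y)"
    by (metis le_add_same_cancel1 norm_ge_zero power2_le_imp_le zero_le_power2)
qed

text \<open>Cramer's rule for the Gram system of \<open>v\<close> and \<open>w\<close>, whose determinant is
  \<open>norm (cross3 v w)\<^sup>2\<close>.\<close>

lemma common_perpendicular_exists:
  fixes d v w :: "real^3"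
  assumes "cross3 v w \<noteq> 0"
  obtains s t where "(d + s *\<^sub>R v - t *\<^sub>R w) \<bullet> v = 0" "(d + s *\<^sub>R v - t *\<^sub>R w) \<bullet> w = 0"
proof
  define D where "D = (v \<bullet> v) * (w \<bullet> w) - (v \<bullet> w) * (v \<bullet> w)"
  have "D = cross3 v w \<bullet> cross3 v w" unfolding D_def dot_cross by (simp add: inner_commute)
  then have D: "D \<noteq> 0" using assms by simp
  define s where "s = ((d \<bullet> w) * (v \<bullet> w) - (d \<bullet> v) * (w \<bullet> w)) / D"
  define t where "t = ((d \<bullet> w) * (v \<bullet> v) - (d \<bullet> v) * (v \<bullet> w)) / D"
  have "(d + s *\<^sub>R v - t *\<^sub>R w) \<bullet> v = d \<bullet> v + s * (v \<bullet> v) - t * (v \<bullet> w)"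
    by (simp add: inner_add_left inner_diff_left inner_commute[of w v])
  also have "\<dots> = 0" using D unfolding s_def t_def D_def by (simp add: field_simps; algebra)
  finally show "(d + s *\<^sub>R v - t *\<^sub>R w) \<bullet> v = 0" .
  have "(d + s *\<^sub>R v - t *\<^sub>R w) \<bullet> w = d \<bullet> w + s * (v \<bullet> w) - t * (w \<bullet> w)"
    by (simp add: inner_add_left inner_diff_left)
  also have "\<dots> = 0" using D unfolding s_def t_def D_def by (simp add: field_simps; algebra)
  finally show "(d + s *\<^sub>R v - t *\<^sub>R w) \<bullet> w = 0" .
qed

lemma line_dist_skew:
  fixes p q v w n :: "real^3"
  assumes vw: "cross3 v w \<noteq> 0" and n: "norm n = 1" "n \<bullet> v = 0" "n \<bullet> w = 0"
  shows "line_dist (line3 p v) (line3 q w) = \<bar>(p - q) \<bullet> n\<bar>"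
proof -
  have diff_n: "(p + s *\<^sub>R v - (q + t *\<^sub>R w)) \<bullet> n = (p - q) \<bullet> n" for s t
    using n by (simp add: inner_commute[of _ n] inner_add_right inner_diff_right)
  obtain s t where rv: "(p - q + s *\<^sub>R v - t *\<^sub>R w) \<bullet> v = 0"
    and rw: "(p - q + s *\<^sub>R v - t *\<^sub>R w) \<bullet> w = 0"
    using common_perpendicular_exists[OF vw] by blast
  define r where "r = p + s *\<^sub>R v - (q + t *\<^sub>R w)"
  have "r \<bullet> v = 0" "r \<bullet> w = 0" using rv rw unfolding r_def by (simp_all add: algebra_simps)
  then have "cross3 r (cross3 v w) = 0" "cross3 n (cross3 v w) = 0"
    using n by (simp_all add: Lagrange)
  then have "cross3 r n = 0" using vw by (rule cross3_eq_0_trans)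
  then have "(norm r)\<^sup>2 = (r \<bullet> n)\<^sup>2" using norm_cross_dot[of r n] n(1) by simp
  then have "norm r = \<bar>r \<bullet> n\<bar>" by (metis norm_ge_zero real_sqrt_abs real_sqrt_unique)
  show ?thesis
  proof (rule line_dist_eqI)
    show "p + s *\<^sub>R v \<in> line3 p v" "q + t *\<^sub>R w \<in> line3 q w" by (rule line3_memI)+
    show "norm (p + s *\<^sub>R v - (q + t *\<^sub>R w)) = \<bar>(p - q) \<bullet> n\<bar>"
      using \<open>norm r = \<bar>r \<bullet> n\<bar>\<close> diff_n unfolding r_def by simp
    fix x y assume "x \<in> line3 p v" "y \<in> line3 q w"
    then obtain s' t' where "x = p + s' *\<^sub>R v" "y = q + t' *\<^sub>R w" by (metis line3_memE)
    then show "\<bar>(p - q) \<bullet> n\<bar> \<le> norm (x - y)"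
      using Cauchy_Schwarz_ineq2[of "x - y" n] diff_n n(1) by simp
  qed
qed

locale unit_parallel_pair =
  fixes a b v :: "real^3"
  assumes direction_nonzero: "v \<noteq> 0"
    and unit_dist: "line_dist (line3 a v) (line3 b v) = 1"
begin

definition e :: "real^3" where "e = reject v (b - a)"

definition u :: "real^3" where "u = cross3 v e /\<^sub>R norm v"

lemma e_orthogonal: "e \<bullet> v = 0"
  unfolding e_def by (rule reject_orthogonal)

lemma norm_e: "norm e = 1"
proof -
  have "norm (reject v (a - b)) = 1"
    using unit_dist line_dist_parallel[OF direction_nonzero] by simp
  then show ?thesis unfolding e_def using reject_minus[of v "a - b"] by simp
qed

lemma u_orthogonal: "u \<bullet> v = 0" "u \<bullet> e = 0"
  unfolding u_def by (simp_all add: dot_cross_self inner_commute[of _ v])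

lemma norm_u: "norm u = 1"
proof -
  have "(norm (cross3 v e))\<^sup>2 = (norm v)\<^sup>2"
    using norm_cross_dot[of v e] norm_e e_orthogonal by (simp add: inner_commute)
  then have "norm (cross3 v e) = norm v" by simp
  then show ?thesis unfolding u_def using direction_nonzero by simp
qed

lemma inner_frame [simp]: "e \<bullet> e = 1" "u \<bullet> u = 1" "e \<bullet> u = 0" "u \<bullet> e = 0"
  using norm_e norm_u u_orthogonal(2) by (simp_all add: norm_eq_1 inner_commute)

lemma orthogonal_decomposition:
  assumes "x \<bullet> v = 0"
  shows "x = (x \<bullet> e) *\<^sub>R e + (x \<bullet> u) *\<^sub>R u"
proof -
  define y where "y = x - (x \<bullet> e) *\<^sub>R e"
  have "y \<bullet> v = 0" "y \<bullet> e = 0"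
    unfolding y_def using assms e_orthogonal by (simp_all add: inner_diff_left)
  then have "cross3 y (cross3 v e) = 0" by (simp add: Lagrange)
  then have "cross3 y u = 0" unfolding u_def by (simp add: cross_mult_right)
  then have "y = (y \<bullet> u) *\<^sub>R u" using cross3_eq_0_imp_scaleR[of y u] by simp
  moreover have "y \<bullet> u = x \<bullet> u" unfolding y_def by (simp add: inner_diff_left)
  ultimately show ?thesis unfolding y_def by (metis diff_add_cancel add.commute)
qed

lemma parallel_line_position:
  assumes "line_dist (line3 a v) (line3 c v) = 1" "line_dist (line3 b v) (line3 c v) = 1"
  shows "reject v (c - a) = (1/2) *\<^sub>R e + ((c - a) \<bullet> u) *\<^sub>R u"
    and "((c - a) \<bullet> u)\<^sup>2 = 3/4"
proof -
  define f where "f = reject v (c - a)"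
  have "norm (reject v (a - c)) = 1" "norm (reject v (b - c)) = 1"
    using assms line_dist_parallel[OF direction_nonzero] by simp_all
  moreover have "reject v (a - c) = - f" "reject v (b - c) = e - f"
    unfolding f_def e_def by (simp_all add: reject_diff)
  ultimately have "norm f = 1" "norm (f - e) = 1" by (simp_all add: norm_minus_commute)
  then have fe: "f \<bullet> e = 1/2" using dot_norm_neg[of f e] norm_e by simp
  have fu: "f \<bullet> u = (c - a) \<bullet> u" unfolding f_def using u_orthogonal(1) by (rule inner_reject_orthogonal)
  have f_eq: "f = (1/2) *\<^sub>R e + ((c - a) \<bullet> u) *\<^sub>R u"
    using orthogonal_decomposition[of f] reject_orthogonal fe fu unfolding f_def by simp
  then show "reject v (c - a) = (1/2) *\<^sub>R e + ((c - a) \<bullet> u) *\<^sub>R u" unfolding f_def .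
  have "f \<bullet> f = 1" using \<open>norm f = 1\<close> by (simp add: norm_eq_1)
  then show "((c - a) \<bullet> u)\<^sup>2 = 3/4"
    unfolding f_eq by (simp add: inner_add_left inner_add_right power2_eq_square)
qed

lemma skew_line_position:
  assumes vw: "cross3 v w \<noteq> 0"
    and ac: "line_dist (line3 a v) (line3 c w) = 1" and bc: "line_dist (line3 b v) (line3 c w) = 1"
  shows "u \<bullet> w = 0" "\<bar>(c - a) \<bullet> u\<bar> = 1"
proof -
  define n where "n = cross3 v w /\<^sub>R norm (cross3 v w)"
  have n: "norm n = 1" "n \<bullet> v = 0" "n \<bullet> w = 0"
    unfolding n_def using vw by (simp_all add: dot_cross_self inner_commute[of _ v] inner_commute[of _ w])
  have "\<bar>(a - c) \<bullet> n\<bar> = 1" "\<bar>(b - c) \<bullet> n\<bar> = 1"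
    using ac bc line_dist_skew[OF vw n] by simp_all
  moreover have "(b - c) \<bullet> n = (a - c) \<bullet> n + e \<bullet> n"
    unfolding e_def inner_reject_orthogonal[OF n(2)] by (simp add: inner_diff_left)
  moreover have "\<bar>e \<bullet> n\<bar> \<le> 1" using Cauchy_Schwarz_ineq2[of e n] n(1) norm_e by simp
  \<comment> \<open>\<open>(a - c) \<bullet> n\<close> and \<open>(b - c) \<bullet> n\<close> are both \<open>\<plusminus>1\<close> yet differ by at most 1\<close>
  ultimately have "e \<bullet> n = 0" by arith
  then have "n = (n \<bullet> u) *\<^sub>R u" using orthogonal_decomposition[OF n(2)] by (simp add: inner_commute)
  moreover have "n \<bullet> u \<noteq> 0" using n(1) calculation by (metis norm_zero scale_zero_left zero_neq_one)
  ultimately show uw: "u \<bullet> w = 0" using n(3) by (metis inner_scaleR_left mult_eq_0_iff)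
  have "\<bar>(a - c) \<bullet> u\<bar> = 1"
    using ac line_dist_skew[OF vw norm_u u_orthogonal(1) uw] by simp
  then show "\<bar>(c - a) \<bullet> u\<bar> = 1" by (metis abs_minus_cancel inner_minus_left minus_diff_eq)
qed

lemma parallel_parallel_not_unit_dist:
  assumes c: "line_dist (line3 a v) (line3 c v) = 1" "line_dist (line3 b v) (line3 c v) = 1"
    and d: "line_dist (line3 a v) (line3 d v) = 1" "line_dist (line3 b v) (line3 d v) = 1"
  shows "line_dist (line3 c v) (line3 d v) \<noteq> 1"
proof -
  define k h where "k = (c - a) \<bullet> u" and "h = (d - a) \<bullet> u"
  have "line_dist (line3 c v) (line3 d v) = norm (reject v (c - d))"
    by (rule line_dist_parallel[OF direction_nonzero])
  also have "reject v (c - d) = reject v (c - a) - reject v (d - a)"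
    by (simp add: reject_diff)
  also have "\<dots> = (k - h) *\<^sub>R u"
    unfolding k_def h_def parallel_line_position(1)[OF c] parallel_line_position(1)[OF d]
    by (simp add: scaleR_diff_left)
  finally have "line_dist (line3 c v) (line3 d v) = \<bar>k - h\<bar>" using norm_u by simp
  with abs_diff_ne_1_if_squares_3_4[OF parallel_line_position(2)[OF c] parallel_line_position(2)[OF d]]
  show ?thesis unfolding k_def h_def by simp
qed

lemma parallel_skew_not_unit_dist:
  assumes c: "line_dist (line3 a v) (line3 c v) = 1" "line_dist (line3 b v) (line3 c v) = 1"
    and vw: "cross3 v w \<noteq> 0"
    and d: "line_dist (line3 a v) (line3 d w) = 1" "line_dist (line3 b v) (line3 d w) = 1"
  shows "line_dist (line3 c v) (line3 d w) \<noteq> 1"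
proof -
  note pos_d = skew_line_position[OF vw d]
  have "line_dist (line3 c v) (line3 d w) = \<bar>(c - a) \<bullet> u - (d - a) \<bullet> u\<bar>"
    using line_dist_skew[OF vw norm_u u_orthogonal(1) pos_d(1)] by (simp add: inner_diff_left)
  with abs_diff_ne_1_if_square_3_4_abs_1[OF parallel_line_position(2)[OF c] pos_d(2)]
  show ?thesis by simp
qed

lemma skew_skew_not_unit_dist:
  assumes d1: "cross3 v w1 \<noteq> 0" "line_dist (line3 a v) (line3 d1 w1) = 1"
      "line_dist (line3 b v) (line3 d1 w1) = 1"
    and d2: "cross3 v w2 \<noteq> 0" "line_dist (line3 a v) (line3 d2 w2) = 1"
      "line_dist (line3 b v) (line3 d2 w2) = 1"
    and w12: "cross3 w1 w2 \<noteq> 0"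
  shows "line_dist (line3 d1 w1) (line3 d2 w2) \<noteq> 1"
proof -
  note pos1 = skew_line_position[OF d1] and pos2 = skew_line_position[OF d2]
  have "line_dist (line3 d1 w1) (line3 d2 w2) = \<bar>(d1 - a) \<bullet> u - (d2 - a) \<bullet> u\<bar>"
    using line_dist_skew[OF w12 norm_u pos1(1) pos2(1)] by (simp add: inner_diff_left)
  with abs_diff_ne_1_if_abs_1[OF pos1(2) pos2(2)] show ?thesis by simp
qed

end

lemma no_four_unit_dist_lines_three_parallel:
  fixes a b c d v w :: "real^3"
  assumes v: "v \<noteq> 0" and w: "w \<noteq> 0"
    and ab: "line_dist (line3 a v) (line3 b v) = 1"
    and ac: "line_dist (line3 a v) (line3 c v) = 1" and bc: "line_dist (line3 b v) (line3 c v) = 1"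
    and ad: "line_dist (line3 a v) (line3 d w) = 1" and bd: "line_dist (line3 b v) (line3 d w) = 1"
    and cd: "line_dist (line3 c v) (line3 d w) = 1"
  shows False
proof -
  interpret unit_parallel_pair a b v using v ab by unfold_locales
  show False
  proof (cases "cross3 v w = 0")
    case True
    then have "line3 d w = line3 d v" using v w by (rule line3_eq_if_cross3_eq_0)
    then show False using parallel_parallel_not_unit_dist[OF ac bc] ad bd cd by simp
  next
    case False
    then show False using parallel_skew_not_unit_dist[OF ac bc False ad bd] cd by simp
  qed
qed

lemma no_five_unit_dist_lines_with_parallel_pair:
  assumes par: "parallel_lines A B" and lines: "is_line3 C1" "is_line3 C2" "is_line3 C3"
    and AB: "line_dist A B = 1"
    and A: "line_dist A C1 = 1" "line_dist A C2 = 1" "line_dist A C3 = 1"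
    and B: "line_dist B C1 = 1" "line_dist B C2 = 1" "line_dist B C3 = 1"
    and C: "line_dist C1 C2 = 1" "line_dist C1 C3 = 1" "line_dist C2 C3 = 1"
  shows False
proof -
  obtain a b v where v: "v \<noteq> 0" and AB_eq: "A = line3 a v" "B = line3 b v"
    using par unfolding parallel_lines_def by blast
  obtain c1 c2 c3 w1 w2 w3 where w1: "w1 \<noteq> 0" and w2: "w2 \<noteq> 0" and w3: "w3 \<noteq> 0"
    and C_eq: "C1 = line3 c1 w1" "C2 = line3 c2 w2" "C3 = line3 c3 w3"
    using lines unfolding is_line3_def by blast
  have ab: "line_dist (line3 a v) (line3 b v) = 1"
    and a1: "line_dist (line3 a v) (line3 c1 w1) = 1" and b1: "line_dist (line3 b v) (line3 c1 w1) = 1"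
    and a2: "line_dist (line3 a v) (line3 c2 w2) = 1" and b2: "line_dist (line3 b v) (line3 c2 w2) = 1"
    and a3: "line_dist (line3 a v) (line3 c3 w3) = 1" and b3: "line_dist (line3 b v) (line3 c3 w3) = 1"
    and d12: "line_dist (line3 c1 w1) (line3 c2 w2) = 1" and d21: "line_dist (line3 c2 w2) (line3 c1 w1) = 1"
    and d13: "line_dist (line3 c1 w1) (line3 c3 w3) = 1" and d31: "line_dist (line3 c3 w3) (line3 c1 w1) = 1"
    and d23: "line_dist (line3 c2 w2) (line3 c3 w3) = 1"
    using AB A B C unfolding AB_eq C_eq by (simp_all add: line_dist_commute)
  interpret unit_parallel_pair a b v by (rule unit_parallel_pair.intro[OF v ab])
  have skew: "cross3 v w \<noteq> 0"
    if w: "w \<noteq> 0" and w': "w' \<noteq> 0"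
      and ac: "line_dist (line3 a v) (line3 c w) = 1" and bc: "line_dist (line3 b v) (line3 c w) = 1"
      and ac': "line_dist (line3 a v) (line3 c' w') = 1" and bc': "line_dist (line3 b v) (line3 c' w') = 1"
      and cc': "line_dist (line3 c w) (line3 c' w') = 1" for c w c' w'
  proof
    assume "cross3 v w = 0"
    then have eq: "line3 c w = line3 c v" using v w by (rule line3_eq_if_cross3_eq_0)
    show False
      by (rule no_four_unit_dist_lines_three_parallel[OF v w' ab ac[unfolded eq] bc[unfolded eq] ac' bc'
            cc'[unfolded eq]])
  qed
  have vw1: "cross3 v w1 \<noteq> 0" by (rule skew[OF w1 w2 a1 b1 a2 b2 d12])
  have vw2: "cross3 v w2 \<noteq> 0" by (rule skew[OF w2 w1 a2 b2 a1 b1 d21])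
  have vw3: "cross3 v w3 \<noteq> 0" by (rule skew[OF w3 w1 a3 b3 a1 b1 d31])
  have "cross3 w1 w2 = 0" using skew_skew_not_unit_dist[OF vw1 a1 b1 vw2 a2 b2] d12 by blast
  then have l2: "line3 c2 w2 = line3 c2 w1" using w1 w2 by (rule line3_eq_if_cross3_eq_0)
  have "cross3 w1 w3 = 0" using skew_skew_not_unit_dist[OF vw1 a1 b1 vw3 a3 b3] d13 by blast
  then have l3: "line3 c3 w3 = line3 c3 w1" using w1 w3 by (rule line3_eq_if_cross3_eq_0)
  have a1': "line_dist (line3 c1 w1) (line3 a v) = 1" and a2': "line_dist (line3 c2 w1) (line3 a v) = 1"
    and a3': "line_dist (line3 c3 w1) (line3 a v) = 1"
    using a1 a2 a3 unfolding l2 l3 by (simp_all add: line_dist_commute)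
  show False
    by (rule no_four_unit_dist_lines_three_parallel[OF w1 v d12[unfolded l2] d13[unfolded l3]
          d23[unfolded l2 l3] a1' a2' a3'])
qed

theorem mainTheorem4:
  fixes L :: "nat \<Rightarrow> (real^3) set" and n :: nat
  assumes lines: "\<And>i. 1 \<le> i \<Longrightarrow> i \<le> n \<Longrightarrow> is_line3 (L i)"
    and dist: "\<And>i j. 1 \<le> i \<Longrightarrow> i < j \<Longrightarrow> j \<le> n \<Longrightarrow> line_dist (L i) (L j) = 1"
    and par: "\<exists>i j. 1 \<le> i \<and> i < j \<and> j \<le> n \<and> parallel_lines (L i) (L j)"
  shows "n \<le> 4"
proof (rule ccontr)
  assume "\<not> n \<le> 4"
  obtain i j where ij: "1 \<le> i" "i < j" "j \<le> n" "parallel_lines (L i) (L j)"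
    using par by blast
  have "card ({1..n} - {i, j}) = n - 2" using ij by (subst card_Diff_subset) auto
  then have "3 \<le> card ({1..n} - {i, j})" using \<open>\<not> n \<le> 4\<close> by simp
  then obtain K where K: "K \<subseteq> {1..n} - {i, j}" "card K = 3" by (meson obtain_subset_with_card_n)
  then obtain k1 k2 k3 where K_eq: "K = {k1, k2, k3}" and "k1 \<noteq> k2" "k2 \<noteq> k3" "k1 \<noteq> k3"
    by (meson card_3_iff)
  have k: "k1 \<in> {1..n} - {i, j}" "k2 \<in> {1..n} - {i, j}" "k3 \<in> {1..n} - {i, j}"
    using K(1) unfolding K_eq insert_subset by blast+
  have D: "line_dist (L k) (L l) = 1" if "k \<in> {1..n}" "l \<in> {1..n}" "k \<noteq> l" for k l
  proof (cases "k < l")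
    case True
    then show ?thesis using that dist by simp
  next
    case False
    then show ?thesis using that dist[of l k] by (simp add: line_dist_commute)
  qed
  have "i \<in> {1..n}" "j \<in> {1..n}" "i \<noteq> j" using ij by simp_all
  with k \<open>k1 \<noteq> k2\<close> \<open>k2 \<noteq> k3\<close> \<open>k1 \<noteq> k3\<close> show False
    using no_five_unit_dist_lines_with_parallel_pair[OF ij(4) lines[of k1] lines[of k2] lines[of k3]
        D[of i j] D[of i k1] D[of i k2] D[of i k3] D[of j k1] D[of j k2] D[of j k3]
        D[of k1 k2] D[of k1 k3] D[of k2 k3]]
    by auto
qed

end
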